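(* Let $\Sigma$ be a subshift and let $\mathcal G$ be a proper subset of $\mathcal L(\Sigma)$ containing the empty word. If $\mathcal G$ has (W')-specification with gap size $t$, then $\mathcal G$ has (W)-specification with gap size $t$.
   Context: $\Sigma\subset\{0,\ldots,m-1\}^{\mathbb N}$ or $\{0,\ldots,m-1\}^{\mathbb Z}$ is a closed shift-invariant set; $\mathcal L(\Sigma)$ is the set of the empty word $\emptyset$ (with $\emptyset w=w\emptyset=w$, $|\emptyset|=0$) and all finite words appearing in elements of $\Sigma$. (W)-specification: a proper subset $\mathcal G\subset\mathcal L(\Sigma)$ has (W)-specification with gap size $t\geq0$ if for every integer $k\geq2$ and all $v^1,\ldots,v^k\in\mathcal G$ there are $w^1,\ldots,w^{k-1}\in\mathcal L(\Sigma)$ with $|w^i|\leq t$ and $v^1w^1v^2w^2\cdots w^{k-1}v^k\in\mathcal L(\Sigma)$. (W')-specification: a subset $\mathcal G\subset\mathcal L(\Sigma)$ containing the empty word has (W')-specification with gap size $t\ge0$ if for all integers $j,k\geq2$, all $v^1,\ldots,v^{j+k}\in\mathcal G$ and all $w^1,\ldots,w^{j+k-1}\in\mathcal L(\Sigma)$ with $|w^i|\leq t$ such that $u:=v^1w^1v^2\cdots w^{j-1}v^j\in\mathcal L(\Sigma)$ and $v:=v^{j+1}w^{j+1}\cdots w^{j+k-1}v^{j+k}\in\mathcal L(\Sigma)$, there is $w\in\mathcal L(\Sigma)$ with $|w|\leq t$ and $uwv\in\mathcal L(\Sigma)$. *)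

theory Defs
  imports "HOL-Analysis.Analysis"
begin

text \<open>Points of the full shift are functions nat => nat (one-sided) or int => nat (two-sided),
  topologised with the product topology (discrete factors).\<close>

definition subshiftN :: "nat \<Rightarrow> (nat \<Rightarrow> nat) set \<Rightarrow> bool" where
  "subshiftN m S \<longleftrightarrow> (\<forall>x\<in>S. \<forall>k. x k < m) \<and> closed S \<and> (\<lambda>x. x \<circ> Suc) ` S \<subseteq> S"

definition subshiftZ :: "nat \<Rightarrow> (int \<Rightarrow> nat) set \<Rightarrow> bool" where
  "subshiftZ m S \<longleftrightarrow> (\<forall>x\<in>S. \<forall>k. x k < m) \<and> closed S \<and> (\<lambda>x. (\<lambda>k. x (k + 1))) ` S = S"

definition langN :: "(nat \<Rightarrow> nat) set \<Rightarrow> nat list set" where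
  "langN S = insert [] {map (\<lambda>k. x (i + k)) [0..<n] | x i n. x \<in> S}"

definition langZ :: "(int \<Rightarrow> nat) set \<Rightarrow> nat list set" where
  "langZ S = insert [] {map (\<lambda>k. x (i + int k)) [0..<n] | x i n. x \<in> S}"

definition subshift_language :: "nat \<Rightarrow> nat list set \<Rightarrow> bool" where
  "subshift_language m L \<longleftrightarrow>
     (\<exists>S. subshiftN m S \<and> L = langN S) \<or> (\<exists>S. subshiftZ m S \<and> L = langZ S)"

text \<open>Interleaving: v(a) w(a) v(a+1) w(a+1) ... w(a+n-2) v(a+n-1), for n >= 1.\<close>
definition interleave :: "(nat \<Rightarrow> 'a list) \<Rightarrow> (nat \<Rightarrow> 'a list) \<Rightarrow> nat \<Rightarrow> nat \<Rightarrow> 'a list" where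
  "interleave v w a n = concat (map (\<lambda>i. v (a + i) @ w (a + i)) [0..<n - 1]) @ v (a + n - 1)"

definition W_spec :: "'a list set \<Rightarrow> 'a list set \<Rightarrow> nat \<Rightarrow> bool" where
  "W_spec L G t \<longleftrightarrow> G \<subset> L \<and>
     (\<forall>k \<ge> 2. \<forall>v. (\<forall>i<k. v i \<in> G) \<longrightarrow>
        (\<exists>w. (\<forall>i<k - 1. w i \<in> L \<and> length (w i) \<le> t) \<and> interleave v w 0 k \<in> L))"

definition W'_spec :: "'a list set \<Rightarrow> 'a list set \<Rightarrow> nat \<Rightarrow> bool" where
  "W'_spec L G t \<longleftrightarrow> G \<subseteq> L \<and> [] \<in> G \<and>
     (\<forall>j \<ge> 2. \<forall>k \<ge> 2. \<forall>v w.
        (\<forall>i<j + k. v i \<in> G) \<longrightarrow> (\<forall>i<j + k - 1. w i \<in> L \<and> length (w i) \<le> t) \<longrightarrow>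
        interleave v w 0 j \<in> L \<longrightarrow> interleave v w j k \<in> L \<longrightarrow>
        (\<exists>u. u \<in> L \<and> length u \<le> t \<and> interleave v w 0 j @ u @ interleave v w j k \<in> L))"

end

theory Submission
  imports Defs
begin

text \<open>Once \<open>v\<^sup>1 w\<^sup>1 \<dots> v\<^sup>k\<close> lies in the language,
  apply (W')-specification to the blocks \<open>v\<^sup>1 w\<^sup>1 \<dots> v\<^sup>k \<emptyset> \<emptyset>\<close> (\<open>k + 1\<close> words) and
  \<open>\<emptyset> \<emptyset> v\<^sup>k\<^sup>+\<^sup>1\<close> (two words): padding with the empty word, which lies in \<open>\<G>\<close>, removes the
  restriction to at least two words per block, and the gap it provides joins \<open>v\<^sup>k\<^sup>+\<^sup>1\<close>.\<close>

lemma interleave_cong: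
  assumes "n \<ge> 1"
    and "\<And>i. i < n \<Longrightarrow> v (a + i) = v' (a + i)"
    and "\<And>i. i < n - 1 \<Longrightarrow> w (a + i) = w' (a + i)"
  shows "interleave v w a n = interleave v' w' a n"
proof -
  have "map (\<lambda>i. v (a + i) @ w (a + i)) [0..<n - 1] = map (\<lambda>i. v' (a + i) @ w' (a + i)) [0..<n - 1]"
    using assms by (intro map_cong) auto
  moreover have "v (a + n - 1) = v' (a + n - 1)"
    using assms(1) assms(2)[of "n - 1"] by simp
  ultimately show ?thesis
    unfolding interleave_def by (simp only:)
qed

lemma interleave_Suc:
  assumes "n \<ge> 1"
  shows "interleave v w a (Suc n) = interleave v w a n @ w (a + n - 1) @ v (a + n)"
proof -
  have "[0..<n] = [0..<n - 1] @ [n - 1]"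
    using assms by (metis Suc_diff_1 less_le_trans upt_Suc_append zero_le zero_less_one)
  then show ?thesis
    using assms unfolding interleave_def by simp
qed

lemma interleave_one: "interleave v w a 1 = v a"
  unfolding interleave_def by simp

lemma interleave_two: "interleave v w a 2 = v a @ w a @ v (a + 1)"
  unfolding interleave_def by (simp add: numeral_2_eq_2)

lemma W'_spec_append:
  assumes W': "W'_spec L G t" and "j \<ge> 1"
    and v: "\<forall>i<j. v i \<in> G" and w: "\<forall>i<j - 1. w i \<in> L \<and> length (w i) \<le> t"
    and joined: "interleave v w 0 j \<in> L" and y: "y \<in> G"
  shows "\<exists>u \<in> L. length u \<le> t \<and> interleave v w 0 j @ u @ y \<in> L"
proof -
  have "G \<subseteq> L" and "[] \<in> G"
    using W' unfolding W'_spec_def by blast+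
  define v' where "v' i = (if i < j then v i else if i = j + 2 then y else [])" for i
  define w' where "w' i = (if i < j - 1 then w i else [])" for i
  have v': "\<forall>i<(j + 1) + 2. v' i \<in> G"
    using v y \<open>[] \<in> G\<close> unfolding v'_def by auto
  have w': "\<forall>i<(j + 1) + 2 - 1. w' i \<in> L \<and> length (w' i) \<le> t"
    using w \<open>[] \<in> G\<close> \<open>G \<subseteq> L\<close> unfolding w'_def by auto
  have "interleave v' w' 0 j = interleave v w 0 j"
    using \<open>j \<ge> 1\<close> by (intro interleave_cong) (auto simp: v'_def w'_def)
  moreover have "w' (j - 1) = []" and "v' j = []"
    by (simp_all add: v'_def w'_def)
  ultimately have left: "interleave v' w' 0 (j + 1) = interleave v w 0 j"
    using interleave_Suc[OF \<open>j \<ge> 1\<close>, of v' w' 0] by simp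
  have right: "interleave v' w' (j + 1) 2 = y"
    by (auto simp: interleave_two v'_def w'_def)
  have "j + 1 \<ge> 2"
    using \<open>j \<ge> 1\<close> by simp
  moreover have "interleave v' w' 0 (j + 1) \<in> L" and "interleave v' w' (j + 1) 2 \<in> L"
    using joined y \<open>G \<subseteq> L\<close> unfolding left right by auto
  ultimately have "\<exists>u. u \<in> L \<and> length u \<le> t \<and>
      interleave v' w' 0 (j + 1) @ u @ interleave v' w' (j + 1) 2 \<in> L"
    using W'[unfolded W'_spec_def, THEN conjunct2, THEN conjunct2, rule_format, of "j + 1" 2 v' w']
      v' w' by simp
  then show ?thesis
    unfolding left right by blast
qed

lemma W'_spec_interleave_in_lang:
  assumes W': "W'_spec L G t" and "k \<ge> 1" and v: "\<forall>i<k. v i \<in> G"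
  shows "\<exists>w. (\<forall>i<k - 1. w i \<in> L \<and> length (w i) \<le> t) \<and> interleave v w 0 k \<in> L"
  using \<open>k \<ge> 1\<close> v
proof (induction k rule: dec_induct)
  case base
  then have "interleave v w 0 1 \<in> L" for w
    using W' unfolding W'_spec_def interleave_one by auto
  then show ?case
    by simp
next
  case (step k)
  then obtain w where w: "\<forall>i<k - 1. w i \<in> L \<and> length (w i) \<le> t"
    and joined: "interleave v w 0 k \<in> L"
    by auto
  have "\<forall>i<k. v i \<in> G" and "v k \<in> G"
    using step.prems by simp_all
  then obtain u where u: "u \<in> L" "length u \<le> t" and glued: "interleave v w 0 k @ u @ v k \<in> L"
    using W'_spec_append[OF W' step.hyps(1) _ w joined] by blast
  define w' where "w' i = (if i < k - 1 then w i else u)" for i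
  have "interleave v w' 0 k = interleave v w 0 k"
    using step.hyps(1) by (intro interleave_cong) (simp_all add: w'_def)
  then have "interleave v w' 0 (Suc k) \<in> L"
    using interleave_Suc[OF step.hyps(1), of v w' 0] glued by (simp add: w'_def)
  moreover have "\<forall>i<Suc k - 1. w' i \<in> L \<and> length (w' i) \<le> t"
    using w u unfolding w'_def by auto
  ultimately show ?case
    by blast
qed

theorem lemma2p3:
  fixes m t :: nat and L G :: "nat list set"
  assumes "subshift_language m L"
    and "G \<subset> L" and "[] \<in> G"
    and "W'_spec L G t"
  shows "W_spec L G t"
  unfolding W_spec_def using assms(2) W'_spec_interleave_in_lang[OF assms(4)] by auto

end
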